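(* Let $Q$ be a quantale with m-filters $(\mathcal{F}_k)_{k=1}^\infty$ such that $\mathcal{F}=\bigcap_{k=1}^\infty\mathcal{F}_k$ is locally solid, and let $M$ be a shrinkable $Q$-module such that every $\mathcal{F}_k$ is 1-step over $M$. Then the map $M_\mathcal{F}\to\prod_{k=1}^\infty M_{\mathcal{F}_k}$, $\overline x\mapsto(\overline x)_k$, is injective. (More precisely: for $a,b\in M$, if $a\preceq^1_{\mathcal{F}_k}b$ for all $k$, then $a\preceq^1_\mathcal{F}b$.)
   Context: A quantale is a poset $Q$ with all nonempty joins $\sum$ (no bottom required), top $1$, commutative associative multiplication with unit $1$ distributing over nonempty joins. A $Q$-module is a poset $M$ with all nonempty joins and an associative unital action distributing over nonempty joins in each variable. An m-filter is a subset of $Q$ containing $1$, upward closed and closed under multiplication. $\mathcal{F}$ is locally solid if there is a nonempty $W\subseteq Q$ with $\sum W=1$ such that for every $w\in W$ and every nonempty family $(x_i)_{i\in I}$ with $\sum_ix_i\in\mathcal{F}$ there exist $t\in\mathcal{F}$ and finite nonempty $I_0\subseteq I$ with $tw\le\sum_{i\in I_0}x_i$. For $x,x_i$ write $x\le^*\sum_ix_i$ if $x\le\sum_{i\in I_0}x_i$ for some finite nonempty $I_0$; $M$ is shrinkable if whenever $x\le\sum_ix_i$ there is a family $(y_j)$ with $x=\sum_jy_j$ and each $y_j\le^*\sum_ix_i$. For $a,b\in M$: $a\preceq^1_\mathcal{F}b$ means there are families $(a_i)$ in $M$, $(s_i)$ in $\mathcal{F}$ with $a\le\sum a_i$ and $s_ia_i\le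 b$; $a\preceq^n_\mathcal{F}b$ means a chain of $n$ such steps; $a\preceq_\mathcal{F}b$ means $a\preceq^n_\mathcal{F}b$ for some $n\ge1$. $M_\mathcal{F}$ is $M$ modulo $a\sim b\iff a\preceq_\mathcal{F}b\preceq_\mathcal{F}a$, with classes $\overline a$. $\mathcal{F}$ is localizable over $M$ if for each $b$ there is $n_b$ with $a\preceq_\mathcal{F}b\Rightarrow a\preceq^{n_b}_\mathcal{F}b$; 1-step over $M$ if localizable and $a\preceq_\mathcal{F}b\Rightarrow a\preceq^1_\mathcal{F}b$. *)

theory Defs
  imports Main
begin

text \<open>No bottom is required.\<close>


definition is_nejoin :: "('a::order set \<Rightarrow> 'a) \<Rightarrow> bool" where
  "is_nejoin j \<longleftrightarrow>
     (\<forall>X. X \<noteq> {} \<longrightarrow> (\<forall>x\<in>X. x \<le> j X) \<and> (\<forall>u. (\<forall>x\<in>X. x \<le> u) \<longrightarrow> j X \<le> u))"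

definition quantale :: "('q::order set \<Rightarrow> 'q) \<Rightarrow> ('q \<Rightarrow> 'q \<Rightarrow> 'q) \<Rightarrow> 'q \<Rightarrow> bool" where
  "quantale jQ mult one \<longleftrightarrow>
     is_nejoin jQ \<and>
     (\<forall>x. x \<le> one) \<and>
     (\<forall>x y. mult x y = mult y x) \<and>
     (\<forall>x y z. mult (mult x y) z = mult x (mult y z)) \<and>
     (\<forall>x. mult one x = x) \<and>
     (\<forall>x X. X \<noteq> {} \<longrightarrow> mult x (jQ X) = jQ (mult x ` X))"

definition qmodule ::
  "('q::order set \<Rightarrow> 'q) \<Rightarrow> ('q \<Rightarrow> 'q \<Rightarrow> 'q) \<Rightarrow> 'q \<Rightarrow>
   ('m::order set \<Rightarrow> 'm) \<Rightarrow> ('q \<Rightarrow> 'm \<Rightarrow> 'm) \<Rightarrow> bool" where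
  "qmodule jQ mult one jM act \<longleftrightarrow>
     is_nejoin jM \<and>
     (\<forall>s t a. act (mult s t) a = act s (act t a)) \<and>
     (\<forall>a. act one a = a) \<and>
     (\<forall>s A. A \<noteq> {} \<longrightarrow> act s (jM A) = jM (act s ` A)) \<and>
     (\<forall>S a. S \<noteq> {} \<longrightarrow> act (jQ S) a = jM ((\<lambda>s. act s a) ` S))"

definition mfilter :: "('q::order \<Rightarrow> 'q \<Rightarrow> 'q) \<Rightarrow> 'q \<Rightarrow> 'q set \<Rightarrow> bool" where
  "mfilter mult one F \<longleftrightarrow>
     one \<in> F \<and> (\<forall>x y. x \<in> F \<and> x \<le> y \<longrightarrow> y \<in> F) \<and>
     (\<forall>x\<in>F. \<forall>y\<in>F. mult x y \<in> F)"

text \<open>Families are represented by their (nonempty) sets of members; joins of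
families only depend on the set of members.\<close>

definition locally_solid ::
  "('q::order set \<Rightarrow> 'q) \<Rightarrow> ('q \<Rightarrow> 'q \<Rightarrow> 'q) \<Rightarrow> 'q \<Rightarrow> 'q set \<Rightarrow> bool" where
  "locally_solid jQ mult one F \<longleftrightarrow>
     (\<exists>W. W \<noteq> {} \<and> jQ W = one \<and>
        (\<forall>w\<in>W. \<forall>X. X \<noteq> {} \<and> jQ X \<in> F \<longrightarrow>
           (\<exists>t\<in>F. \<exists>I0. I0 \<subseteq> X \<and> finite I0 \<and> I0 \<noteq> {} \<and> mult t w \<le> jQ I0)))"

definition le_star :: "('m::order set \<Rightarrow> 'm) \<Rightarrow> 'm \<Rightarrow> 'm set \<Rightarrow> bool" where
  "le_star jM x X \<longleftrightarrow> (\<exists>I0. I0 \<subseteq> X \<and> finite I0 \<and> I0 \<noteq> {} \<and> x \<le> jM I0)"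

definition shrinkable :: "('m::order set \<Rightarrow> 'm) \<Rightarrow> bool" where
  "shrinkable jM \<longleftrightarrow>
     (\<forall>x X. X \<noteq> {} \<and> x \<le> jM X \<longrightarrow>
        (\<exists>Y. Y \<noteq> {} \<and> x = jM Y \<and> (\<forall>y\<in>Y. le_star jM y X)))"

definition prec1 ::
  "('m::order set \<Rightarrow> 'm) \<Rightarrow> ('q \<Rightarrow> 'm \<Rightarrow> 'm) \<Rightarrow> 'q set \<Rightarrow> 'm \<Rightarrow> 'm \<Rightarrow> bool" where
  "prec1 jM act F a b \<longleftrightarrow>
     (\<exists>S::('q \<times> 'm) set. S \<noteq> {} \<and> fst ` S \<subseteq> F \<and> a \<le> jM (snd ` S) \<and>
        (\<forall>(s, c)\<in>S. act s c \<le> b))"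

definition precn ::
  "('m::order set \<Rightarrow> 'm) \<Rightarrow> ('q \<Rightarrow> 'm \<Rightarrow> 'm) \<Rightarrow> 'q set \<Rightarrow> nat \<Rightarrow> 'm \<Rightarrow> 'm \<Rightarrow> bool" where
  "precn jM act F n a b \<longleftrightarrow>
     (\<exists>c::nat \<Rightarrow> 'm. c 0 = a \<and> c n = b \<and> (\<forall>i<n. prec1 jM act F (c i) (c (Suc i))))"

definition prec ::
  "('m::order set \<Rightarrow> 'm) \<Rightarrow> ('q \<Rightarrow> 'm \<Rightarrow> 'm) \<Rightarrow> 'q set \<Rightarrow> 'm \<Rightarrow> 'm \<Rightarrow> bool" where
  "prec jM act F a b \<longleftrightarrow> (\<exists>n\<ge>1. precn jM act F n a b)"

definition prec_equiv ::
  "('m::order set \<Rightarrow> 'm) \<Rightarrow> ('q \<Rightarrow> 'm \<Rightarrow> 'm) \<Rightarrow> 'q set \<Rightarrow> 'm \<Rightarrow> 'm \<Rightarrow> bool" where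
  "prec_equiv jM act F a b \<longleftrightarrow> prec jM act F a b \<and> prec jM act F b a"

definition cls ::
  "('m::order set \<Rightarrow> 'm) \<Rightarrow> ('q \<Rightarrow> 'm \<Rightarrow> 'm) \<Rightarrow> 'q set \<Rightarrow> 'm \<Rightarrow> 'm set" where
  "cls jM act F a = {b. prec_equiv jM act F a b}"

definition localizable ::
  "('m::order set \<Rightarrow> 'm) \<Rightarrow> ('q \<Rightarrow> 'm \<Rightarrow> 'm) \<Rightarrow> 'q set \<Rightarrow> bool" where
  "localizable jM act F \<longleftrightarrow>
     (\<forall>b. \<exists>nb. \<forall>a. prec jM act F a b \<longrightarrow> precn jM act F nb a b)"

definition one_step ::
  "('m::order set \<Rightarrow> 'm) \<Rightarrow> ('q \<Rightarrow> 'm \<Rightarrow> 'm) \<Rightarrow> 'q set \<Rightarrow> bool" where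
  "one_step jM act F \<longleftrightarrow>
     localizable jM act F \<and> (\<forall>a b. prec jM act F a b \<longrightarrow> prec1 jM act F a b)"

end

theory Submission
  imports Defs
begin

text \<open>Fix \<open>w\<close> in the set \<open>W\<close> witnessing local solidity of \<open>\<F> = \<Inter>\<^sub>k \<F>\<^sub>k\<close>; it suffices to show
\<open>w a \<preceq>\<^sup>1\<^sub>\<F> b\<close>, because \<open>a = \<Sum>\<^sub>w\<^sub>\<in>\<^sub>W w a\<close> and \<open>\<preceq>\<^sup>1\<^sub>\<F> b\<close> is closed under joins. Call \<open>z\<close> bad if
\<open>w z \<preceq>\<^sup>1\<^sub>\<F> b\<close> fails. Shrinkability applied to a witness of \<open>a \<preceq>\<^sup>1\<^sub>\<F>\<^sub>n b\<close> writes any \<open>z \<le> a\<close> as a join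
of elements each of which a single scalar of \<open>\<F>\<^sub>n\<close> pushes below \<open>b\<close>; if \<open>z\<close> is bad, one of them
is bad as well. Starting from a bad \<open>a\<close> this yields a decreasing sequence of bad elements
\<open>y\<^sub>n\<close> and scalars \<open>u\<^sub>n \<in> \<F>\<^sub>n\<close> with \<open>u\<^sub>n y\<^sub>n\<^sub>+\<^sub>1 \<le> b\<close>. The join of all \<open>u\<^sub>n\<close> lies in \<open>\<F>\<close>, so local
solidity gives \<open>t \<in> \<F>\<close> with \<open>t w \<le> u\<^sub>0 + \<dots> + u\<^sub>N\<close>; then \<open>t (w y\<^sub>N\<^sub>+\<^sub>1) \<le> b\<close>, so \<open>y\<^sub>N\<^sub>+\<^sub>1\<close> is not bad.\<close>

lemma nejoin_upper: "is_nejoin j \<Longrightarrow> x \<in> X \<Longrightarrow> x \<le> j X"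
  unfolding is_nejoin_def by blast

lemma nejoin_least: "is_nejoin j \<Longrightarrow> X \<noteq> {} \<Longrightarrow> (\<And>x. x \<in> X \<Longrightarrow> x \<le> u) \<Longrightarrow> j X \<le> u"
  unfolding is_nejoin_def by blast

lemma nejoin_mono: "is_nejoin j \<Longrightarrow> X \<noteq> {} \<Longrightarrow> X \<subseteq> Y \<Longrightarrow> j X \<le> j Y"
  by (rule nejoin_least) (auto intro: nejoin_upper)

lemma nejoin_pair: "is_nejoin j \<Longrightarrow> x \<le> y \<Longrightarrow> j {x, y} = y"
  by (rule order.antisym) (auto intro: nejoin_least nejoin_upper)

lemma mfilter_one: "mfilter mult one G \<Longrightarrow> one \<in> G"
  unfolding mfilter_def by simp

lemma mfilter_upward: "mfilter mult one G \<Longrightarrow> x \<in> G \<Longrightarrow> x \<le> y \<Longrightarrow> y \<in> G"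
  unfolding mfilter_def by blast

lemma mfilter_mult: "mfilter mult one G \<Longrightarrow> x \<in> G \<Longrightarrow> y \<in> G \<Longrightarrow> mult x y \<in> G"
  unfolding mfilter_def by blast

lemma prec_iff_tranclp: "prec jM act F a b \<longleftrightarrow> (prec1 jM act F)\<^sup>+\<^sup>+ a b"
  unfolding prec_def precn_def tranclp_power relpowp_fun_conv[symmetric]
  by (simp add: Suc_le_eq)

lemma prec_trans: "prec jM act F a b \<Longrightarrow> prec jM act F b c \<Longrightarrow> prec jM act F a c"
  unfolding prec_iff_tranclp by (rule tranclp_trans)

lemma prec1_imp_prec: "prec1 jM act F a b \<Longrightarrow> prec jM act F a b"
  unfolding prec_iff_tranclp by (rule tranclp.r_into_trancl)

lemma prec1I:
  assumes "S \<noteq> {}" "fst ` S \<subseteq> F" "a \<le> jM (snd ` S)" "\<And>s c. (s, c) \<in> S \<Longrightarrow> act s c \<le> b"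
  shows "prec1 jM act F a b"
  unfolding prec1_def using assms by blast

lemma prec1E:
  assumes "prec1 jM act F a b"
  obtains S where "S \<noteq> {}" "fst ` S \<subseteq> F" "a \<le> jM (snd ` S)" "\<And>s c. (s, c) \<in> S \<Longrightarrow> act s c \<le> b"
  using assms unfolding prec1_def by blast

lemma prec1_join:
  assumes j: "is_nejoin jM" and "Y \<noteq> {}" and "\<And>y. y \<in> Y \<Longrightarrow> prec1 jM act F y b"
  shows "prec1 jM act F (jM Y) b"
proof -
  have "\<forall>y\<in>Y. \<exists>S. S \<noteq> {} \<and> fst ` S \<subseteq> F \<and> y \<le> jM (snd ` S) \<and> (\<forall>(s, c)\<in>S. act s c \<le> b)"
    using assms(3) unfolding prec1_def by blast
  then obtain S where S: "\<And>y. y \<in> Y \<Longrightarrow> S y \<noteq> {}" "\<And>y. y \<in> Y \<Longrightarrow> fst ` S y \<subseteq> F"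
    "\<And>y. y \<in> Y \<Longrightarrow> y \<le> jM (snd ` S y)" "\<And>y s c. y \<in> Y \<Longrightarrow> (s, c) \<in> S y \<Longrightarrow> act s c \<le> b"
    by (metis (lifting) bchoice case_prodD)
  define T where "T = (\<Union>y\<in>Y. S y)"
  show ?thesis
  proof (rule prec1I)
    show "T \<noteq> {}" using S(1) \<open>Y \<noteq> {}\<close> unfolding T_def by blast
    show "fst ` T \<subseteq> F" using S(2) unfolding T_def by blast
    show "act s c \<le> b" if "(s, c) \<in> T" for s c using S(4) that unfolding T_def by blast
    show "jM Y \<le> jM (snd ` T)"
    proof (rule nejoin_least[OF j \<open>Y \<noteq> {}\<close>])
      fix y assume "y \<in> Y"
      then have "y \<le> jM (snd ` S y)" by (rule S(3))
      also have "\<dots> \<le> jM (snd ` T)"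
        using S(1) \<open>y \<in> Y\<close> unfolding T_def by (intro nejoin_mono[OF j]) auto
      finally show "y \<le> jM (snd ` T)" .
    qed
  qed
qed

lemma shrinkableE:
  assumes "shrinkable jM" "X \<noteq> {}" "x \<le> jM X"
  obtains Y where "Y \<noteq> {}" "x = jM Y" "\<forall>y\<in>Y. le_star jM y X"
  using assms(1)[unfolded shrinkable_def, rule_format, OF conjI[OF assms(2,3)]]
  by (elim exE conjE) (rule that)

definition solid_at :: "('q::order set \<Rightarrow> 'q) \<Rightarrow> ('q \<Rightarrow> 'q \<Rightarrow> 'q) \<Rightarrow> 'q set \<Rightarrow> 'q \<Rightarrow> bool" where
  "solid_at jQ mult F w \<longleftrightarrow>
     (\<forall>X. X \<noteq> {} \<and> jQ X \<in> F \<longrightarrow>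
        (\<exists>t\<in>F. \<exists>I0. I0 \<subseteq> X \<and> finite I0 \<and> I0 \<noteq> {} \<and> mult t w \<le> jQ I0))"

lemma locally_solid_iff:
  "locally_solid jQ mult one F \<longleftrightarrow> (\<exists>W. W \<noteq> {} \<and> jQ W = one \<and> (\<forall>w\<in>W. solid_at jQ mult F w))"
  unfolding locally_solid_def solid_at_def ..

lemma solid_atD:
  "solid_at jQ mult F w \<Longrightarrow> X \<noteq> {} \<Longrightarrow> jQ X \<in> F \<Longrightarrow>
    \<exists>t\<in>F. \<exists>I0. I0 \<subseteq> X \<and> finite I0 \<and> I0 \<noteq> {} \<and> mult t w \<le> jQ I0"
  unfolding solid_at_def by blast

lemma solid_at_Inter_sequence:
  fixes Fk :: "nat \<Rightarrow> 'q::order set"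
  assumes j: "is_nejoin jQ" and filters: "\<forall>k. mfilter mult one (Fk k)"
    and solid: "solid_at jQ mult (\<Inter>k. Fk k) w" and u: "\<And>n. u n \<in> Fk n"
  shows "\<exists>t\<in>(\<Inter>k. Fk k). \<exists>N. mult t w \<le> jQ (u ` {..N})"
proof -
  have "jQ (range u) \<in> Fk k" for k
    by (rule mfilter_upward[OF filters[rule_format] u]) (rule nejoin_upper[OF j], simp)
  then have "jQ (range u) \<in> (\<Inter>k. Fk k)" by blast
  then obtain t I0 where t: "t \<in> (\<Inter>k. Fk k)" and I0: "I0 \<subseteq> range u" "finite I0" "I0 \<noteq> {}"
    and tw: "mult t w \<le> jQ I0"
    using solid_atD[OF solid, of "range u"] by blast
  obtain C where "finite C" "I0 = u ` C"
    using finite_subset_image[OF I0(2,1)] by blast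
  then have "I0 \<subseteq> u ` {..Max C}"
    by (auto intro: Max_ge)
  then have "jQ I0 \<le> jQ (u ` {..Max C})" by (rule nejoin_mono[OF j I0(3)])
  with t tw show ?thesis by (meson order.trans)
qed

locale quantale_module =
  fixes jQ :: "'q::order set \<Rightarrow> 'q" and mult :: "'q \<Rightarrow> 'q \<Rightarrow> 'q" and one :: 'q
    and jM :: "'m::order set \<Rightarrow> 'm" and act :: "'q \<Rightarrow> 'm \<Rightarrow> 'm"
  assumes quantale: "quantale jQ mult one"
    and qmodule: "qmodule jQ mult one jM act"
begin

lemma nejoin_Q: "is_nejoin jQ"
  using quantale unfolding quantale_def by simp

lemma nejoin_M: "is_nejoin jM"
  using qmodule unfolding qmodule_def by simp

lemma le_one: "s \<le> one"
  using quantale unfolding quantale_def by simp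

lemma mult_commute: "mult s t = mult t s"
  using quantale unfolding quantale_def by blast

lemma act_mult: "act (mult s t) x = act s (act t x)"
  using qmodule unfolding qmodule_def by simp

lemma act_one: "act one x = x"
  using qmodule unfolding qmodule_def by simp

lemma act_join: "A \<noteq> {} \<Longrightarrow> act s (jM A) = jM (act s ` A)"
  using qmodule unfolding qmodule_def by simp

lemma act_join_scalars: "S \<noteq> {} \<Longrightarrow> act (jQ S) x = jM ((\<lambda>s. act s x) ` S)"
  using qmodule unfolding qmodule_def by simp

lemma act_mono:
  assumes "x \<le> y"
  shows "act s x \<le> act s y"
proof -
  have "act s x \<le> jM (act s ` {x, y})" by (rule nejoin_upper[OF nejoin_M]) simp
  also have "\<dots> = act s y" using act_join[of "{x, y}" s] nejoin_pair[OF nejoin_M assms] by simp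
  finally show ?thesis .
qed

lemma act_mono_scalar:
  assumes "s \<le> s'"
  shows "act s x \<le> act s' x"
proof -
  have "act s x \<le> jM ((\<lambda>s. act s x) ` {s, s'})" by (rule nejoin_upper[OF nejoin_M]) simp
  also have "\<dots> = act s' x"
    using act_join_scalars[of "{s, s'}" x] nejoin_pair[OF nejoin_Q assms] by simp
  finally show ?thesis .
qed

lemma act_le: "act s x \<le> x"
  using act_mono_scalar[OF le_one] by (simp add: act_one)

lemma act_join_le:
  assumes "A \<noteq> {}" "\<And>c. c \<in> A \<Longrightarrow> act s c \<le> b"
  shows "act s (jM A) \<le> b"
  unfolding act_join[OF assms(1)] using assms by (auto intro: nejoin_least[OF nejoin_M])

text \<open>Since scalars only shrink elements, the product of the given scalars works.\<close>

lemma mfilter_common_scalar: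
  assumes G: "mfilter mult one G"
  shows "finite I0 \<Longrightarrow> I0 \<noteq> {} \<Longrightarrow> \<forall>c\<in>I0. \<exists>s\<in>G. act s c \<le> b \<Longrightarrow> \<exists>u\<in>G. \<forall>c\<in>I0. act u c \<le> b"
proof (induction I0 rule: finite_ne_induct)
  case (singleton x)
  then show ?case by auto
next
  case (insert x I0)
  then obtain u s where u: "u \<in> G" "\<forall>c\<in>I0. act u c \<le> b" and s: "s \<in> G" "act s x \<le> b"
    by auto
  have "act (mult s u) c \<le> b" if "c \<in> insert x I0" for c
  proof (cases "c = x")
    case True
    have "act (mult s u) c = act u (act s c)" unfolding mult_commute[of s u] by (rule act_mult)
    also have "\<dots> \<le> act s c" by (rule act_le)
    finally show ?thesis using s(2) True by simp
  next
    case False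
    have "act (mult s u) c = act s (act u c)" by (rule act_mult)
    also have "\<dots> \<le> act u c" by (rule act_le)
    also have "\<dots> \<le> b" using u(2) False that by simp
    finally show ?thesis .
  qed
  with mfilter_mult[OF G s(1) u(1)] show ?case by blast
qed

lemma prec1_decompose_below:
  assumes "shrinkable jM" and G: "mfilter mult one G" and "prec1 jM act G a b" and "z \<le> a"
  shows "\<exists>Y. Y \<noteq> {} \<and> z = jM Y \<and> (\<forall>y\<in>Y. \<exists>u\<in>G. act u y \<le> b)"
proof -
  obtain S where S: "S \<noteq> {}" "fst ` S \<subseteq> G" "a \<le> jM (snd ` S)"
    "\<And>s c. (s, c) \<in> S \<Longrightarrow> act s c \<le> b"
    using assms(3) by (elim prec1E) (rule that)
  have "z \<le> jM (snd ` S)" using \<open>z \<le> a\<close> S(3) by (rule order.trans)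
  moreover have "snd ` S \<noteq> {}" using S(1) by simp
  ultimately obtain Y where Y: "Y \<noteq> {}" "z = jM Y" "\<forall>y\<in>Y. le_star jM y (snd ` S)"
    using \<open>shrinkable jM\<close> by (elim shrinkableE)
  have "\<exists>u\<in>G. act u y \<le> b" if "y \<in> Y" for y
  proof -
    obtain I0 where I0: "I0 \<subseteq> snd ` S" "finite I0" "I0 \<noteq> {}" "y \<le> jM I0"
      using Y(3) \<open>y \<in> Y\<close> unfolding le_star_def by blast
    have "\<exists>s\<in>G. act s c \<le> b" if "c \<in> I0" for c
    proof -
      obtain p where "p \<in> S" "c = snd p" using I0(1) \<open>c \<in> I0\<close> by blast
      then show ?thesis using S(2) S(4)[of "fst p" "snd p"] by auto
    qed
    then obtain u where "u \<in> G" "\<forall>c\<in>I0. act u c \<le> b"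
      using mfilter_common_scalar[OF G I0(2,3)] by blast
    have "act u y \<le> act u (jM I0)" using I0(4) by (rule act_mono)
    also have "\<dots> \<le> b" using act_join_le[OF I0(3)] \<open>\<forall>c\<in>I0. act u c \<le> b\<close> by blast
    finally show ?thesis using \<open>u \<in> G\<close> by blast
  qed
  with Y(1,2) show ?thesis by blast
qed

lemma not_prec1_descend:
  assumes "shrinkable jM" and "mfilter mult one G" and "prec1 jM act G a b" and "z \<le> a"
    and bad: "\<not> prec1 jM act F (act w z) b"
  shows "\<exists>y. y \<le> z \<and> \<not> prec1 jM act F (act w y) b \<and> (\<exists>u\<in>G. act u y \<le> b)"
proof -
  obtain Y where Y: "Y \<noteq> {}" "z = jM Y" "\<forall>y\<in>Y. \<exists>u\<in>G. act u y \<le> b"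
    using prec1_decompose_below[OF assms(1-4)] by blast
  have "\<exists>y\<in>Y. \<not> prec1 jM act F (act w y) b"
  proof (rule ccontr)
    assume "\<not> ?thesis"
    then have "prec1 jM act F (jM (act w ` Y)) b"
      using Y(1) by (intro prec1_join[OF nejoin_M]) auto
    with bad Y(1,2) show False by (simp add: act_join)
  qed
  then obtain y where "y \<in> Y" "\<not> prec1 jM act F (act w y) b" ..
  moreover have "y \<le> z" using \<open>y \<in> Y\<close> Y(2) nejoin_upper[OF nejoin_M] by blast
  ultimately show ?thesis using Y(3) by blast
qed

lemma prec1_Inter_act_solid:
  fixes Fk :: "nat \<Rightarrow> 'q set"
  assumes "shrinkable jM" and filters: "\<forall>k. mfilter mult one (Fk k)"
    and solid: "solid_at jQ mult (\<Inter>k. Fk k) w" and prec: "\<forall>k. prec1 jM act (Fk k) a b"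
  shows "prec1 jM act (\<Inter>k. Fk k) (act w a) b"
proof (rule ccontr)
  define bad where "bad z \<longleftrightarrow> \<not> prec1 jM act (\<Inter>k. Fk k) (act w z) b" for z
  assume "\<not> prec1 jM act (\<Inter>k. Fk k) (act w a) b"
  then have start: "\<exists>z. z \<le> a \<and> bad z" unfolding bad_def by blast
  have descend: "\<exists>y. (y \<le> a \<and> bad y) \<and> y \<le> z \<and> (\<exists>u\<in>Fk n. act u y \<le> b)"
    if "z \<le> a \<and> bad z" for z n
  proof -
    have "z \<le> a" and bad_z: "\<not> prec1 jM act (\<Inter>k. Fk k) (act w z) b"
      using that unfolding bad_def by blast+
    then obtain y where "y \<le> z" "bad y" "\<exists>u\<in>Fk n. act u y \<le> b"
      using not_prec1_descend[OF \<open>shrinkable jM\<close> filters[rule_format] prec[rule_format]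
          \<open>z \<le> a\<close> bad_z]
      unfolding bad_def by blast
    with that show ?thesis by (meson order.trans)
  qed
  obtain y where y: "\<forall>n. (y n \<le> a \<and> bad (y n)) \<and> y (Suc n) \<le> y n \<and>
      (\<exists>u\<in>Fk n. act u (y (Suc n)) \<le> b)"
    using dependent_nat_choice[of "\<lambda>_ z. z \<le> a \<and> bad z"
        "\<lambda>n z y. y \<le> z \<and> (\<exists>u\<in>Fk n. act u y \<le> b)", OF start descend] by blast
  then have y_dec: "\<And>n. y (Suc n) \<le> y n" by blast
  from y have "\<forall>n. \<exists>u. u \<in> Fk n \<and> act u (y (Suc n)) \<le> b" by blast
  from choice[OF this] obtain u where u: "\<forall>n. u n \<in> Fk n \<and> act (u n) (y (Suc n)) \<le> b" ..
  then have "\<And>n. u n \<in> Fk n" by blast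
  then obtain t N where t: "t \<in> (\<Inter>k. Fk k)" and tw: "mult t w \<le> jQ (u ` {..N})"
    using solid_at_Inter_sequence[OF nejoin_Q filters solid] by blast
  have bound: "act (u n) (y (Suc N)) \<le> b" if "n \<le> N" for n
  proof -
    have "y (Suc N) \<le> y (Suc n)"
      by (rule lift_Suc_antimono_le[of y, OF y_dec]) (simp add: that)
    then have "act (u n) (y (Suc N)) \<le> act (u n) (y (Suc n))" by (rule act_mono)
    also have "\<dots> \<le> b" using u by blast
    finally show ?thesis .
  qed
  have "act t (act w (y (Suc N))) = act (mult t w) (y (Suc N))" by (rule act_mult[symmetric])
  also have "\<dots> \<le> act (jQ (u ` {..N})) (y (Suc N))" by (rule act_mono_scalar[OF tw])
  also have "\<dots> = jM ((\<lambda>s. act s (y (Suc N))) ` u ` {..N})"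
    by (rule act_join_scalars) simp
  also have "\<dots> \<le> b"
    by (rule nejoin_least[OF nejoin_M]) (use bound in auto)
  finally have "act t (act w (y (Suc N))) \<le> b" .
  then have "prec1 jM act (\<Inter>k. Fk k) (act w (y (Suc N))) b"
    using t by (intro prec1I[of "{(t, act w (y (Suc N)))}"]) (auto intro: nejoin_upper[OF nejoin_M])
  with y show False unfolding bad_def by blast
qed

lemma prec1_Inter_if_prec1_all:
  fixes Fk :: "nat \<Rightarrow> 'q set"
  assumes "shrinkable jM" and "\<forall>k. mfilter mult one (Fk k)"
    and "locally_solid jQ mult one (\<Inter>k. Fk k)" and "\<forall>k. prec1 jM act (Fk k) a b"
  shows "prec1 jM act (\<Inter>k. Fk k) a b"
proof -
  obtain W where W: "W \<noteq> {}" "jQ W = one" "\<forall>w\<in>W. solid_at jQ mult (\<Inter>k. Fk k) w"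
    using assms(3) unfolding locally_solid_iff by blast
  have "a = jM ((\<lambda>w. act w a) ` W)"
    using act_join_scalars[OF W(1), of a] W(2) by (simp add: act_one)
  moreover have "prec1 jM act (\<Inter>k. Fk k) (jM ((\<lambda>w. act w a) ` W)) b"
    using W prec1_Inter_act_solid[OF assms(1,2) _ assms(4)]
    by (intro prec1_join[OF nejoin_M]) auto
  ultimately show ?thesis by simp
qed

lemma prec_refl:
  assumes "one \<in> F"
  shows "prec jM act F a a"
proof (rule prec1_imp_prec)
  show "prec1 jM act F a a"
    using assms by (intro prec1I[of "{(one, a)}"]) (auto simp: act_one intro: nejoin_upper[OF nejoin_M])
qed

lemma cls_eq_iff_prec_equiv:
  assumes "one \<in> F"
  shows "cls jM act F a = cls jM act F b \<longleftrightarrow> prec_equiv jM act F a b"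
proof
  assume "cls jM act F a = cls jM act F b"
  moreover have "b \<in> cls jM act F b"
    unfolding cls_def prec_equiv_def using prec_refl[OF assms] by blast
  ultimately show "prec_equiv jM act F a b" unfolding cls_def by blast
next
  assume "prec_equiv jM act F a b"
  then show "cls jM act F a = cls jM act F b"
    unfolding cls_def prec_equiv_def by (blast intro: prec_trans)
qed

end

theorem mainTheorem11:
  fixes jQ :: "'q::order set \<Rightarrow> 'q" and mult :: "'q \<Rightarrow> 'q \<Rightarrow> 'q" and one :: 'q
    and jM :: "'m::order set \<Rightarrow> 'm" and act :: "'q \<Rightarrow> 'm \<Rightarrow> 'm"
    and Fk :: "nat \<Rightarrow> 'q set"
  assumes "quantale jQ mult one"
    and "qmodule jQ mult one jM act"
    and "\<forall>k. mfilter mult one (Fk k)"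
    and "locally_solid jQ mult one (\<Inter>k. Fk k)"
    and "shrinkable jM"
    and "\<forall>k. one_step jM act (Fk k)"
  shows "(\<forall>a b. (\<forall>k. cls jM act (Fk k) a = cls jM act (Fk k) b) \<longrightarrow>
                 cls jM act (\<Inter>k. Fk k) a = cls jM act (\<Inter>k. Fk k) b)
       \<and> (\<forall>a b. (\<forall>k. prec1 jM act (Fk k) a b) \<longrightarrow> prec1 jM act (\<Inter>k. Fk k) a b)"
proof -
  interpret quantale_module jQ mult one jM act
    using assms(1,2) by unfold_locales
  have one: "one \<in> Fk k" for k using assms(3) mfilter_one by blast
  have Inter: "prec1 jM act (\<Inter>k. Fk k) a b" if "\<forall>k. prec1 jM act (Fk k) a b" for a b
    using prec1_Inter_if_prec1_all[OF assms(5,3,4) that] .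
  have "cls jM act (\<Inter>k. Fk k) a = cls jM act (\<Inter>k. Fk k) b"
    if "\<forall>k. cls jM act (Fk k) a = cls jM act (Fk k) b" for a b
  proof -
    have "prec_equiv jM act (Fk k) a b" for k
      using that cls_eq_iff_prec_equiv[OF one] by blast
    then have "prec1 jM act (Fk k) a b \<and> prec1 jM act (Fk k) b a" for k
      using assms(6) unfolding one_step_def prec_equiv_def by blast
    then have "prec_equiv jM act (\<Inter>k. Fk k) a b"
      unfolding prec_equiv_def by (blast intro: Inter prec1_imp_prec)
    then show ?thesis using one by (simp add: cls_eq_iff_prec_equiv)
  qed
  with Inter show ?thesis by blast
qed

end
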